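(* Let $q\in\mathbb{C}$, $q\neq0,1$, not a root of unity, and let $(K,\sigma,\theta^{*})$ be a (commutative) qsi field over $\mathbb{C}$. Then the linear qsi system \[ \sigma Y=\begin{bmatrix} q&0\\0&1\end{bmatrix}Y,\qquad \theta^{(1)}Y=\begin{bmatrix}0&1\\0&0\end{bmatrix}Y \] has no qsi Picard–Vessiot extension $L/K$; that is, there is no (commutative) qsi field extension $(L,\sigma,\theta^{*})$ of $K$ together with a solution $Y\in\mathrm{GL}_2(L)$ of the system such that $L$ is generated as a field over $K$ by the entries of $Y$ and the field of constants of $L$ coincides with the field of constants of $K$.
   Context: Fix $q\in\mathbb{C}$, $q\neq0,1$, not a root of unity; put $[m]_q=1+q+\dots+q^{m-1}$ and $[m]_q!=[1]_q\cdots[m]_q$. A qsi algebra over $\mathbb{C}$ is a triple $(A,\sigma,\theta^{*})$ with $A$ a $\mathbb{C}$-algebra, $\sigma$ a $\mathbb{C}$-algebra automorphism of $A$, $\theta^{*}=\{\theta^{(m)}\}_{m\in\mathbb{N}}$ $\mathbb{C}$-linear maps with $\theta^{(0)}=\mathrm{Id}$, $\theta^{(m)}=\frac{1}{[m]_q!}(\theta^{(1)})^m$, $\theta^{(1)}(ab)=\theta^{(1)}(a)b+\sigma(a)\theta^{(1)}(b)$ and $\theta^{(1)}\sigma=q\sigma\theta^{(1)}$. A qsi field is a qsi algebra that is a commutative field; a qsi field extension $L/K$ is an inclusion of qsi fields compatible with $\sigma$ and all $\theta^{(m)}$. The constants of a qsi algebra $A$ are the elements $a$ with $\sigma(a)=a$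 and $\theta^{(m)}(a)=0$ for all $m\ge1$. *)

theory Defs
  imports "HOL-Analysis.Analysis"
begin

definition qint :: "complex \<Rightarrow> nat \<Rightarrow> complex" where
  "qint q m = (\<Sum>i<m. q ^ i)"

definition qfact :: "complex \<Rightarrow> nat \<Rightarrow> complex" where
  "qfact q m = (\<Prod>i\<in>{1..m}. qint q i)"

definition complex_alg_map :: "(complex \<Rightarrow> 'a::field) \<Rightarrow> bool" where
  "complex_alg_map \<iota> \<longleftrightarrow> \<iota> 1 = 1 \<and> (\<forall>x y. \<iota> (x + y) = \<iota> x + \<iota> y) \<and> (\<forall>x y. \<iota> (x * y) = \<iota> x * \<iota> y)"

definition qsi_field :: "complex \<Rightarrow> (complex \<Rightarrow> 'a::field) \<Rightarrow> ('a \<Rightarrow> 'a) \<Rightarrow> (nat \<Rightarrow> 'a \<Rightarrow> 'a) \<Rightarrow> bool" where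
  "qsi_field q \<iota> \<sigma> \<theta> \<longleftrightarrow>
     complex_alg_map \<iota> \<and>
     bij \<sigma> \<and> (\<forall>a b. \<sigma> (a + b) = \<sigma> a + \<sigma> b) \<and> (\<forall>a b. \<sigma> (a * b) = \<sigma> a * \<sigma> b) \<and>
     \<sigma> 1 = 1 \<and> (\<forall>c. \<sigma> (\<iota> c) = \<iota> c) \<and>
     (\<forall>m a b. \<theta> m (a + b) = \<theta> m a + \<theta> m b) \<and>
     (\<forall>m c a. \<theta> m (\<iota> c * a) = \<iota> c * \<theta> m a) \<and>
     \<theta> 0 = id \<and>
     (\<forall>m a. \<theta> m a = \<iota> (1 / qfact q m) * (\<theta> 1 ^^ m) a) \<and>
     (\<forall>a b. \<theta> 1 (a * b) = \<theta> 1 a * b + \<sigma> a * \<theta> 1 b) \<and>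
     (\<forall>a. \<theta> 1 (\<sigma> a) = \<iota> q * \<sigma> (\<theta> 1 a))"

definition qsi_constants :: "('a \<Rightarrow> 'a) \<Rightarrow> (nat \<Rightarrow> 'a \<Rightarrow> 'a::zero) \<Rightarrow> 'a set" where
  "qsi_constants \<sigma> \<theta> = {a. \<sigma> a = a \<and> (\<forall>m\<ge>1. \<theta> m a = 0)}"

definition qsi_field_ext ::
  "complex \<Rightarrow> (complex \<Rightarrow> 'a::field) \<Rightarrow> ('a \<Rightarrow> 'a) \<Rightarrow> (nat \<Rightarrow> 'a \<Rightarrow> 'a) \<Rightarrow>
   (complex \<Rightarrow> 'b::field) \<Rightarrow> ('b \<Rightarrow> 'b) \<Rightarrow> (nat \<Rightarrow> 'b \<Rightarrow> 'b) \<Rightarrow> ('a \<Rightarrow> 'b) \<Rightarrow> bool" where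
  "qsi_field_ext q \<iota>K \<sigma>K \<theta>K \<iota>L \<sigma>L \<theta>L e \<longleftrightarrow>
     qsi_field q \<iota>K \<sigma>K \<theta>K \<and> qsi_field q \<iota>L \<sigma>L \<theta>L \<and>
     e 1 = 1 \<and> (\<forall>a b. e (a + b) = e a + e b) \<and> (\<forall>a b. e (a * b) = e a * e b) \<and>
     (\<forall>c. e (\<iota>K c) = \<iota>L c) \<and>
     (\<forall>a. e (\<sigma>K a) = \<sigma>L (e a)) \<and>
     (\<forall>m a. e (\<theta>K m a) = \<theta>L m (e a))"

definition is_subfield :: "'a::field set \<Rightarrow> bool" where
  "is_subfield S \<longleftrightarrow> 0 \<in> S \<and> 1 \<in> S \<and> (\<forall>a\<in>S. \<forall>b\<in>S. a + b \<in> S \<and> a * b \<in> S) \<and>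
     (\<forall>a\<in>S. - a \<in> S \<and> inverse a \<in> S)"

definition subfield_generated :: "'a::field set \<Rightarrow> 'a set" where
  "subfield_generated A = \<Inter>{S. A \<subseteq> S \<and> is_subfield S}"

definition mat_map :: "('a \<Rightarrow> 'b) \<Rightarrow> 'a^'n^'m \<Rightarrow> 'b^'n^'m" where
  "mat_map f Y = (\<chi> i j. f (Y $ i $ j))"

definition mat_entries :: "'a^'n^'m \<Rightarrow> 'a set" where
  "mat_entries Y = {Y $ i $ j | i j. True}"

end

theory Submission
  imports Defs
begin

text \<open>The system has no invertible solution in any commutative qsi field. If \<open>a\<^sub>1, a\<^sub>2\<close> is the first row
  of \<open>Y\<close>, then \<open>\<sigma> a\<^sub>i = q a\<^sub>i\<close> and \<open>\<theta>\<^sup>(\<^sup>1\<^sup>) a\<^sub>i\<close> is the entry below \<open>a\<^sub>i\<close>. Expanding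
  \<open>\<theta>\<^sup>(\<^sup>1\<^sup>)(a\<^sub>1 a\<^sub>2) = \<theta>\<^sup>(\<^sup>1\<^sup>)(a\<^sub>2 a\<^sub>1)\<close> with the twisted Leibniz rule gives \<open>(q - 1) det Y = 0\<close>,
  contradicting \<open>q \<noteq> 1\<close> and the invertibility of \<open>Y\<close>.\<close>

lemma complex_alg_map_inj:
  assumes "complex_alg_map \<iota>"
  shows "inj \<iota>"
proof (rule injI, rule ccontr)
  fix x y
  assume eq: "\<iota> x = \<iota> y" and ne: "x \<noteq> y"
  have add: "\<And>u v. \<iota> (u + v) = \<iota> u + \<iota> v" and mult: "\<And>u v. \<iota> (u * v) = \<iota> u * \<iota> v"
    and one: "\<iota> 1 = 1"
    using assms unfolding complex_alg_map_def by blast+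
  have "\<iota> (x - y) = 0"
    using add[of "x - y" y] eq by simp
  moreover have "\<iota> (x - y) * \<iota> (1 / (x - y)) = 1"
    using mult[of "x - y" "1 / (x - y)"] one ne by simp
  ultimately show False by simp
qed

lemma twisted_derivation_wronskian_eigen:
  fixes \<theta> \<sigma> :: "'a::comm_ring_1 \<Rightarrow> 'a"
  assumes leibniz: "\<And>u v. \<theta> (u * v) = \<theta> u * v + \<sigma> u * \<theta> v"
    and "\<sigma> a = c * a" and "\<sigma> b = c * b"
  shows "(c - 1) * (a * \<theta> b - b * \<theta> a) = 0"
proof -
  have "\<theta> (a * b) = \<theta> (b * a)" by (simp add: mult.commute)
  hence "\<theta> a * b + c * a * \<theta> b = \<theta> b * a + c * b * \<theta> a"
    by (simp only: leibniz assms)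
  thus ?thesis by (simp add: algebra_simps)
qed

lemma mat_map_eq_mult_2x2_first_row:
  fixes Y :: "'a::field^2^2"
  assumes "mat_map f Y = vector [vector [x, y], vector [z, w]] ** Y"
  shows "f (Y$1$j) = x * Y$1$j + y * Y$2$j"
proof -
  have "f (Y$1$j) = mat_map f Y $ 1 $ j" by (simp add: mat_map_def)
  also have "\<dots> = x * Y$1$j + y * Y$2$j"
    by (simp add: assms matrix_matrix_mult_def sum_2 vector_2)
  finally show ?thesis .
qed

theorem corollary2:
  fixes q :: complex
    and \<iota>K :: "complex \<Rightarrow> 'a::field" and \<sigma>K :: "'a \<Rightarrow> 'a" and \<theta>K :: "nat \<Rightarrow> 'a \<Rightarrow> 'a"
    and \<iota>L :: "complex \<Rightarrow> 'b::field" and \<sigma>L :: "'b \<Rightarrow> 'b" and \<theta>L :: "nat \<Rightarrow> 'b \<Rightarrow> 'b"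
    and e :: "'a \<Rightarrow> 'b" and Y :: "'b^2^2"
  assumes "q \<noteq> 0" and "q \<noteq> 1" and "\<forall>n::nat. n \<ge> 1 \<longrightarrow> q ^ n \<noteq> 1"
    and "qsi_field q \<iota>K \<sigma>K \<theta>K"
  shows "\<not> (qsi_field_ext q \<iota>K \<sigma>K \<theta>K \<iota>L \<sigma>L \<theta>L e \<and>
            invertible Y \<and>
            mat_map \<sigma>L Y = vector [vector [\<iota>L q, 0], vector [0, 1]] ** Y \<and>
            mat_map (\<theta>L 1) Y = vector [vector [0, 1], vector [0, 0]] ** Y \<and>
            subfield_generated (range e \<union> mat_entries Y) = UNIV \<and>
            qsi_constants \<sigma>L \<theta>L = e ` qsi_constants \<sigma>K \<theta>K)"
proof
  assume H: "qsi_field_ext q \<iota>K \<sigma>K \<theta>K \<iota>L \<sigma>L \<theta>L e \<and>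
            invertible Y \<and>
            mat_map \<sigma>L Y = vector [vector [\<iota>L q, 0], vector [0, 1]] ** Y \<and>
            mat_map (\<theta>L 1) Y = vector [vector [0, 1], vector [0, 0]] ** Y \<and>
            subfield_generated (range e \<union> mat_entries Y) = UNIV \<and>
            qsi_constants \<sigma>L \<theta>L = e ` qsi_constants \<sigma>K \<theta>K"
  have L: "qsi_field q \<iota>L \<sigma>L \<theta>L"
    using H unfolding qsi_field_ext_def by blast
  have leibniz: "\<And>u v. \<theta>L 1 (u * v) = \<theta>L 1 u * v + \<sigma>L u * \<theta>L 1 v"
    using L unfolding qsi_field_def by blast
  have \<sigma>_row: "\<sigma>L (Y$1$j) = \<iota>L q * Y$1$j" for j
    using mat_map_eq_mult_2x2_first_row[of \<sigma>L Y] H by simp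
  have \<theta>_row: "\<theta>L 1 (Y$1$j) = Y$2$j" for j
    using mat_map_eq_mult_2x2_first_row[of "\<theta>L 1" Y] H by simp
  have "\<iota>L q \<noteq> \<iota>L 1"
    using complex_alg_map_inj L \<open>q \<noteq> 1\<close> unfolding qsi_field_def by (metis injD)
  hence "\<iota>L q - 1 \<noteq> 0"
    using L unfolding qsi_field_def complex_alg_map_def by simp
  moreover have "Y$1$1 * Y$2$2 - Y$1$2 * Y$2$1 \<noteq> 0"
    using H by (metis det_2 invertible_det_nz)
  moreover have "(\<iota>L q - 1) * (Y$1$1 * Y$2$2 - Y$1$2 * Y$2$1) = 0"
    using twisted_derivation_wronskian_eigen[OF leibniz \<sigma>_row \<sigma>_row] \<theta>_row
    by (simp add: mult.commute)
  ultimately show False by simp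
qed

end
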